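(* Let $\omega\colon\mathbf Z_+\to(0,+\infty)$ be a positive weight and let $T\colon\mathbf Z_+\to\mathbf Z_+$ be the modified Collatz map ($T(n)=n/2$ if $n$ is even, $T(n)=(3n+1)/2$ if $n$ is odd). Let $\mathcal X_\omega$ be the Hilbert space of holomorphic functions $f(z)=\sum_{n\ge 3}c_nz^n$ on the unit disk with $\|f\|_\omega^2=\sum_{n\ge3}|c_n|^2/\omega(n)<\infty$, and let $\mathcal T$ be defined on $\mathcal X_\omega$ by \[\mathcal T\sum_{n\ge3}c_nz^n=\sum_{j\ge 3,\ T(j)\ge 3}c_jz^{T(j)}\] (so the coefficient of $z^k$, $k\ge3$, in $\mathcal Tf$ is $\sum_{j\ge3,\,T(j)=k}c_j$). Then $\mathcal T$ is a bounded operator on $\mathcal X_\omega$ if and only if the three sequences $(\omega(6m)/\omega(3m))_{m\ge1}$, $(\omega(6m+2)/\omega(3m+1))_{m\ge1}$ and $((\omega(6m+4)+\omega(2m+1))/\omega(3m+2))_{m\ge1}$ are bounded. In this case \[\|\mathcal T\|_\omega^2=\max\Big\{\sup_{m\ge1}\tfrac{\omega(6m)}{\omega(3m)},\ \sup_{m\ge1}\tfrac{\omega(6m+2)}{\omega(3m+1)},\ \sup_{m\ge1}\tfrac{\omega(6m+4)+\omega(2m+1)}{\omega(3m+2)}\Big\},\] and moreover for every $n\ge0$, \[\|\mathcal T^n\|_\omega^2=\sup_{k\ge3}\sum_{j\ge3,\ T^n(j)=k}\frac{\omega(j)}{\omega(k)}.\] In particular, for $\omega=\omega_0$ with $\omega_0(n)=(n+1)/\pi$,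 $\mathcal T$ is bounded on $\mathcal X_{\omega_0}$ and $\|\mathcal T\|^2=8/3$.
   Context: $\mathcal X_\omega$ is the quotient of the weighted Bergman space $\mathcal B^2_\omega=\{\sum_{n\ge0}c_nz^n:\sum|c_n|^2/\omega(n)<\infty\}$ by $\mathrm{span}[1,z,z^2]$, identified with functions $\sum_{n\ge3}c_nz^n$; its inner product is $\langle f,g\rangle=\sum_{n\ge3}c_n(f)\overline{c_n(g)}/\omega(n)$. For $\omega_0(n)=(n+1)/\pi$, $\mathcal B^2_{\omega_0}$ is the classical Bergman space. *)

theory Defs
  imports "HOL-Analysis.Analysis"
begin

definition collatzT :: "nat \<Rightarrow> nat" where
  "collatzT n = (if even n then n div 2 else (3 * n + 1) div 2)"

text \<open>Elements of X_omega, represented by their Taylor coefficient sequences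
  (coefficients of index < 3 vanish).\<close>
definition in_X :: "(nat \<Rightarrow> real) \<Rightarrow> (nat \<Rightarrow> complex) \<Rightarrow> bool" where
  "in_X \<omega> c \<longleftrightarrow> (\<forall>n<3. c n = 0) \<and> summable (\<lambda>n. (cmod (c n))\<^sup>2 / \<omega> n)"

definition wnorm :: "(nat \<Rightarrow> real) \<Rightarrow> (nat \<Rightarrow> complex) \<Rightarrow> real" where
  "wnorm \<omega> c = sqrt (\<Sum>n. (cmod (c n))\<^sup>2 / \<omega> n)"

definition Top :: "(nat \<Rightarrow> complex) \<Rightarrow> (nat \<Rightarrow> complex)" where
  "Top c = (\<lambda>k. if k < 3 then 0 else (\<Sum>j\<in>{j. 3 \<le> j \<and> collatzT j = k}. c j))"

definition bounded_on_X :: "(nat \<Rightarrow> real) \<Rightarrow> ((nat \<Rightarrow> complex) \<Rightarrow> (nat \<Rightarrow> complex)) \<Rightarrow> bool" where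
  "bounded_on_X \<omega> A \<longleftrightarrow>
     (\<forall>c. in_X \<omega> c \<longrightarrow> in_X \<omega> (A c)) \<and>
     (\<exists>C. \<forall>c. in_X \<omega> c \<longrightarrow> wnorm \<omega> (A c) \<le> C * wnorm \<omega> c)"

definition opnorm_X :: "(nat \<Rightarrow> real) \<Rightarrow> ((nat \<Rightarrow> complex) \<Rightarrow> (nat \<Rightarrow> complex)) \<Rightarrow> real" where
  "opnorm_X \<omega> A = Sup ((\<lambda>c. wnorm \<omega> (A c)) ` {c. in_X \<omega> c \<and> wnorm \<omega> c \<le> 1})"

definition omega0 :: "nat \<Rightarrow> real" where
  "omega0 n = (real n + 1) / pi"

end

(*
  The operator Top is the push-forward of coefficient sequences along T: the k-th
  coefficient of Top c is the sum of c j over the fibre {j >= 3. T j = k}.  For the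
  push-forward along any map with finite fibres, Cauchy-Schwarz on one fibre bounds
  |(Top c) k|^2 / omega k by S k times the weighted mass of c on that fibre, where
  S k = (sum of omega j over the fibre) / omega k.  The fibres are disjoint, so the
  squared norm of Top c is at most (sup S) times that of c.  Conversely, the vector
  proportional to omega on a single fibre attains S k, so the squared operator norm
  is exactly sup S.  The fibres of T over 3m, 3m+1 and 3m+2 are {6m}, {6m+2} and
  {6m+4, 2m+1}; and since T maps {0,1,2} into itself, the n-th power of Top is the
  push-forward along the n-th iterate of T.  For omega0 the three ratios are at most
  2, at most 2, and equal to 8/3 - 1/(3m+3).
*)

theory Submission
  imports Defs
begin

lemma in_X_zero: "in_X \<omega> (\<lambda>_. 0)"
  by (simp add: in_X_def)

lemma bounded_on_X_id: "bounded_on_X \<omega> id"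
  unfolding bounded_on_X_def by (intro conjI exI[of _ 1]) auto

lemma opnorm_X_le:
  assumes "\<And>c. in_X \<omega> c \<Longrightarrow> wnorm \<omega> c \<le> 1 \<Longrightarrow> wnorm \<omega> (A c) \<le> C"
  shows "opnorm_X \<omega> A \<le> C"
  unfolding opnorm_X_def using assms in_X_zero[of \<omega>]
  by (intro cSUP_least) (auto simp: wnorm_def)

lemma bounded_on_X_cong:
  assumes "\<And>c. in_X \<omega> c \<Longrightarrow> A c = B c"
  shows "bounded_on_X \<omega> A = bounded_on_X \<omega> B" "opnorm_X \<omega> A = opnorm_X \<omega> B"
  using assms by (auto simp: bounded_on_X_def opnorm_X_def intro!: SUP_cong)

locale positive_weight =
  fixes \<omega> :: "nat \<Rightarrow> real"
  assumes weight_pos: "0 < \<omega> n"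
begin

lemma wnorm_sq: "in_X \<omega> c \<Longrightarrow> (wnorm \<omega> c)\<^sup>2 = (\<Sum>n. (cmod (c n))\<^sup>2 / \<omega> n)"
  using suminf_nonneg[of "\<lambda>n. (cmod (c n))\<^sup>2 / \<omega> n"] weight_pos
  by (simp add: wnorm_def in_X_def less_imp_le)

lemma wnorm_nonneg: "in_X \<omega> c \<Longrightarrow> 0 \<le> wnorm \<omega> c"
  using wnorm_sq by (metis real_sqrt_ge_0_iff wnorm_def zero_le_power2)

lemma coeff_sq_le_wnorm_sq: "in_X \<omega> c \<Longrightarrow> (cmod (c k))\<^sup>2 / \<omega> k \<le> (wnorm \<omega> c)\<^sup>2"
  using sum_le_suminf[of "\<lambda>n. (cmod (c n))\<^sup>2 / \<omega> n" "{k}"] weight_pos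
  by (auto simp: wnorm_sq in_X_def less_imp_le)

lemma bounded_on_X_nonneg_bound:
  assumes "bounded_on_X \<omega> A"
  obtains C where "C \<ge> 0" "\<And>c. in_X \<omega> c \<Longrightarrow> wnorm \<omega> (A c) \<le> C * wnorm \<omega> c"
proof -
  obtain C where C: "\<And>c. in_X \<omega> c \<Longrightarrow> wnorm \<omega> (A c) \<le> C * wnorm \<omega> c"
    using assms by (auto simp: bounded_on_X_def)
  have "wnorm \<omega> (A c) \<le> max C 0 * wnorm \<omega> c" if "in_X \<omega> c" for c
    using C[OF that] wnorm_nonneg[OF that] by (smt (verit) mult_right_mono)
  then show ?thesis using that[of "max C 0"] by simp
qed

lemma bounded_on_X_comp:
  assumes "bounded_on_X \<omega> A" "bounded_on_X \<omega> B"
  shows "bounded_on_X \<omega> (A \<circ> B)"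
proof -
  obtain C where "C \<ge> 0" and C: "\<And>c. in_X \<omega> c \<Longrightarrow> wnorm \<omega> (A c) \<le> C * wnorm \<omega> c"
    using bounded_on_X_nonneg_bound[OF assms(1)] by blast
  obtain D where D: "\<And>c. in_X \<omega> c \<Longrightarrow> wnorm \<omega> (B c) \<le> D * wnorm \<omega> c"
    using assms(2) by (auto simp: bounded_on_X_def)
  have "wnorm \<omega> (A (B c)) \<le> (C * D) * wnorm \<omega> c" if "in_X \<omega> c" for c
  proof -
    have "in_X \<omega> (B c)" using assms(2) that by (simp add: bounded_on_X_def)
    then have "wnorm \<omega> (A (B c)) \<le> C * wnorm \<omega> (B c)" by (rule C)
    also have "\<dots> \<le> C * (D * wnorm \<omega> c)" using D[OF that] \<open>C \<ge> 0\<close> by (rule mult_left_mono)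
    finally show ?thesis by (simp add: mult.assoc)
  qed
  then show ?thesis using assms by (auto simp: bounded_on_X_def)
qed

lemma bounded_on_X_funpow: "bounded_on_X \<omega> A \<Longrightarrow> bounded_on_X \<omega> (A ^^ n)"
proof (induction n)
  case 0
  show ?case unfolding funpow.simps(1) by (rule bounded_on_X_id)
next
  case (Suc n)
  then show ?case unfolding funpow.simps(2) by (intro bounded_on_X_comp)
qed

lemma wnorm_le_opnorm_X:
  assumes "bounded_on_X \<omega> A" "in_X \<omega> c" "wnorm \<omega> c \<le> 1"
  shows "wnorm \<omega> (A c) \<le> opnorm_X \<omega> A"
proof -
  obtain C where "C \<ge> 0" and C: "\<And>c. in_X \<omega> c \<Longrightarrow> wnorm \<omega> (A c) \<le> C * wnorm \<omega> c"
    using bounded_on_X_nonneg_bound[OF assms(1)] by blast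
  have "wnorm \<omega> (A d) \<le> C" if "in_X \<omega> d" "wnorm \<omega> d \<le> 1" for d
    using C[OF that(1)] mult_left_le[OF that(2) \<open>C \<ge> 0\<close>] by linarith
  then have "bdd_above ((\<lambda>c. wnorm \<omega> (A c)) ` {c. in_X \<omega> c \<and> wnorm \<omega> c \<le> 1})"
    by (auto intro!: bdd_aboveI[of _ C])
  then show ?thesis unfolding opnorm_X_def using assms(2,3) by (auto intro: cSUP_upper)
qed

lemma opnorm_X_nonneg:
  assumes "bounded_on_X \<omega> A"
  shows "0 \<le> opnorm_X \<omega> A"
proof -
  have "in_X \<omega> (A (\<lambda>_. 0))" using assms in_X_zero by (simp add: bounded_on_X_def)
  then have "0 \<le> wnorm \<omega> (A (\<lambda>_. 0))" by (rule wnorm_nonneg)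
  also have "\<dots> \<le> opnorm_X \<omega> A"
    using assms in_X_zero by (rule wnorm_le_opnorm_X) (simp add: wnorm_def)
  finally show ?thesis .
qed

end

section \<open>Push-forward along a map with finite fibres\<close>

abbreviation fiber :: "(nat \<Rightarrow> nat) \<Rightarrow> nat \<Rightarrow> nat set" where
  "fiber \<phi> k \<equiv> {j. 3 \<le> j \<and> \<phi> j = k}"

definition push_op :: "(nat \<Rightarrow> nat) \<Rightarrow> (nat \<Rightarrow> complex) \<Rightarrow> nat \<Rightarrow> complex" where
  "push_op \<phi> c = (\<lambda>k. if k < 3 then 0 else (\<Sum>j\<in>fiber \<phi> k. c j))"

definition fiber_ratio :: "(nat \<Rightarrow> real) \<Rightarrow> (nat \<Rightarrow> nat) \<Rightarrow> nat \<Rightarrow> real" where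
  "fiber_ratio \<omega> \<phi> k = (\<Sum>j\<in>fiber \<phi> k. \<omega> j / \<omega> k)"

lemma push_op_id: "(\<And>n. n < 3 \<Longrightarrow> c n = 0) \<Longrightarrow> push_op id c = c"
proof
  fix k
  assume "\<And>n. n < 3 \<Longrightarrow> c n = 0"
  moreover have "3 \<le> k \<Longrightarrow> fiber id k = {k}" by auto
  ultimately show "push_op id c k = c k" by (simp add: push_op_def)
qed

lemma push_op_comp:
  assumes fin: "\<And>k. finite (fiber \<phi> k)" "\<And>k. finite (fiber \<psi> k)"
    and below_3: "\<And>i. 3 \<le> \<phi> i \<Longrightarrow> 3 \<le> i"
  shows "push_op \<phi> (push_op \<psi> c) = push_op (\<phi> \<circ> \<psi>) c"
proof
  fix k
  show "push_op \<phi> (push_op \<psi> c) k = push_op (\<phi> \<circ> \<psi>) c k"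
  proof (cases "k < 3")
    case False
    have "fiber (\<phi> \<circ> \<psi>) k \<subseteq> (\<Union>i\<in>fiber \<phi> k. fiber \<psi> i)"
      using False below_3 by auto
    then have fin_comp: "finite (fiber (\<phi> \<circ> \<psi>) k)"
      by (rule finite_subset) (simp add: fin)
    have "push_op \<phi> (push_op \<psi> c) k = (\<Sum>i\<in>fiber \<phi> k. \<Sum>j\<in>fiber \<psi> i. c j)"
      using False by (simp add: push_op_def)
    also have "\<dots> = (\<Sum>i\<in>fiber \<phi> k. \<Sum>j | j \<in> fiber (\<phi> \<circ> \<psi>) k \<and> \<psi> j = i. c j)"
      by (intro sum.cong) auto
    also have "\<dots> = (\<Sum>j\<in>fiber (\<phi> \<circ> \<psi>) k. c j)"
      using fin_comp fin(1) False below_3 by (intro sum.group) auto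
    finally show ?thesis using False by (simp add: push_op_def)
  qed (simp add: push_op_def)
qed

lemma sum_fibers_le_suminf:
  fixes f :: "nat \<Rightarrow> real"
  assumes "summable f" "\<And>n. 0 \<le> f n" "\<And>k. finite (fiber \<phi> k)"
  shows "(\<Sum>k<N. \<Sum>j\<in>fiber \<phi> k. f j) \<le> suminf f"
proof -
  have "(\<Sum>k<N. \<Sum>j\<in>fiber \<phi> k. f j) = (\<Sum>j\<in>(\<Union>k<N. fiber \<phi> k). f j)"
    using assms(3) by (intro sum.UNION_disjoint[symmetric]) auto
  also have "\<dots> \<le> suminf f"
    using assms by (intro sum_le_suminf) auto
  finally show ?thesis .
qed

context positive_weight
begin

lemma fiber_ratio_nonneg: "0 \<le> fiber_ratio \<omega> \<phi> k"
  unfolding fiber_ratio_def using weight_pos by (intro sum_nonneg) (simp add: less_imp_le)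

lemma push_op_coeff_sq_le:
  assumes fin: "finite (fiber \<phi> k)"
  shows "(cmod (push_op \<phi> c k))\<^sup>2 / \<omega> k
           \<le> fiber_ratio \<omega> \<phi> k * (\<Sum>j\<in>fiber \<phi> k. (cmod (c j))\<^sup>2 / \<omega> j)"
proof (cases "k < 3")
  case True
  then show ?thesis
    using fiber_ratio_nonneg weight_pos by (simp add: push_op_def sum_nonneg less_imp_le)
next
  case False
  have "cmod (push_op \<phi> c k) \<le> (\<Sum>j\<in>fiber \<phi> k. cmod (c j))"
    using False by (simp add: push_op_def norm_sum)
  also have "\<dots> = (\<Sum>j\<in>fiber \<phi> k. (cmod (c j) / sqrt (\<omega> j)) * sqrt (\<omega> j))"
    using weight_pos by (intro sum.cong) (auto simp: less_imp_le, metis less_irrefl)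
  finally have "(cmod (push_op \<phi> c k))\<^sup>2
                  \<le> (\<Sum>j\<in>fiber \<phi> k. (cmod (c j) / sqrt (\<omega> j)) * sqrt (\<omega> j))\<^sup>2"
    by (simp add: power_mono)
  also have "\<dots> \<le> (\<Sum>j\<in>fiber \<phi> k. (cmod (c j) / sqrt (\<omega> j))\<^sup>2)
                  * (\<Sum>j\<in>fiber \<phi> k. (sqrt (\<omega> j))\<^sup>2)"
    by (rule Cauchy_Schwarz_ineq_sum)
  also have "\<dots> = (\<Sum>j\<in>fiber \<phi> k. (cmod (c j))\<^sup>2 / \<omega> j) * (\<Sum>j\<in>fiber \<phi> k. \<omega> j)"
    using weight_pos by (simp add: power_divide less_imp_le)
  finally show ?thesis
    using weight_pos by (simp add: fiber_ratio_def sum_divide_distrib[symmetric]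
        divide_right_mono less_imp_le mult.commute)
qed

lemma push_op_bounded_by:
  assumes fin: "\<And>k. finite (fiber \<phi> k)"
    and M: "\<And>k. 3 \<le> k \<Longrightarrow> fiber_ratio \<omega> \<phi> k \<le> M" and c: "in_X \<omega> c"
  shows "in_X \<omega> (push_op \<phi> c)" "wnorm \<omega> (push_op \<phi> c) \<le> sqrt M * wnorm \<omega> c"
proof -
  define f where "f = (\<lambda>n. (cmod (c n))\<^sup>2 / \<omega> n)"
  define g where "g = (\<lambda>n. (cmod (push_op \<phi> c n))\<^sup>2 / \<omega> n)"
  have f0: "0 \<le> f n" and g0: "0 \<le> g n" for n
    unfolding f_def g_def using weight_pos by (simp_all add: less_imp_le)
  have "M \<ge> 0" using order_trans[OF fiber_ratio_nonneg M[of 3]] by simp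
  have g_le: "g k \<le> M * (\<Sum>j\<in>fiber \<phi> k. f j)" for k
  proof (cases "k < 3")
    case True
    then show ?thesis using \<open>M \<ge> 0\<close> f0 by (simp add: g_def push_op_def sum_nonneg)
  next
    case False
    have "g k \<le> fiber_ratio \<omega> \<phi> k * (\<Sum>j\<in>fiber \<phi> k. f j)"
      using push_op_coeff_sq_le[OF fin] by (simp add: f_def g_def)
    also have "\<dots> \<le> M * (\<Sum>j\<in>fiber \<phi> k. f j)"
      using M False f0 by (intro mult_right_mono sum_nonneg) auto
    finally show ?thesis .
  qed
  have partial_sums: "(\<Sum>k<N. g k) \<le> M * suminf f" for N
  proof -
    have "(\<Sum>k<N. g k) \<le> M * (\<Sum>k<N. \<Sum>j\<in>fiber \<phi> k. f j)"
      using g_le by (simp add: sum_distrib_left sum_mono)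
    also have "\<dots> \<le> M * suminf f"
      using c f0 fin \<open>M \<ge> 0\<close>
      by (intro mult_left_mono sum_fibers_le_suminf) (simp_all add: in_X_def f_def)
    finally show ?thesis .
  qed
  have "summable g"
    by (rule bounded_imp_summable[where B="M * suminf f", OF g0])
       (metis partial_sums lessThan_Suc_atMost)
  then show push_in_X: "in_X \<omega> (push_op \<phi> c)"
    by (simp add: in_X_def g_def push_op_def)
  have "(wnorm \<omega> (push_op \<phi> c))\<^sup>2 = suminf g"
    using wnorm_sq[OF push_in_X] by (simp add: g_def)
  also have "\<dots> \<le> M * suminf f"
    by (rule suminf_le_const[OF \<open>summable g\<close> partial_sums])
  also have "\<dots> = (sqrt M * wnorm \<omega> c)\<^sup>2"
    using wnorm_sq[OF c] \<open>M \<ge> 0\<close> by (simp add: f_def power_mult_distrib)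
  finally show "wnorm \<omega> (push_op \<phi> c) \<le> sqrt M * wnorm \<omega> c"
    by (rule power2_le_imp_le) (use \<open>M \<ge> 0\<close> wnorm_nonneg[OF c] in simp)
qed

lemma fiber_ratio_attained:
  assumes fin: "finite (fiber \<phi> k)" and "3 \<le> k"
  obtains c where "in_X \<omega> c" "wnorm \<omega> c \<le> 1"
    "(cmod (push_op \<phi> c k))\<^sup>2 / \<omega> k = fiber_ratio \<omega> \<phi> k"
proof
  define W where "W = (\<Sum>j\<in>fiber \<phi> k. \<omega> j)"
  have "W \<ge> 0" unfolding W_def using weight_pos by (simp add: sum_nonneg less_imp_le)
  define c where "c j = (if j \<in> fiber \<phi> k then complex_of_real (\<omega> j / sqrt W) else 0)" for j
  \<comment> \<open>An empty fibre gives \<open>W = 0\<close> and, through \<open>x / 0 = 0\<close>, the test vector \<open>c = 0\<close>.\<close>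
  have outside: "(cmod (c n))\<^sup>2 / \<omega> n = 0" if "n \<notin> fiber \<phi> k" for n
    using that by (auto simp: c_def)
  have inside: "(cmod (c n))\<^sup>2 / \<omega> n = \<omega> n / W" if "n \<in> fiber \<phi> k" for n
  proof -
    have "(cmod (c n))\<^sup>2 = (\<omega> n)\<^sup>2 / W"
      using that \<open>W \<ge> 0\<close> by (simp add: c_def norm_divide power_divide)
    then show ?thesis using weight_pos[of n] by (simp add: power2_eq_square)
  qed
  show "in_X \<omega> c"
    unfolding in_X_def using summable_finite[OF fin outside] by (simp add: c_def)
  have "(\<Sum>n. (cmod (c n))\<^sup>2 / \<omega> n) = (\<Sum>n\<in>fiber \<phi> k. (cmod (c n))\<^sup>2 / \<omega> n)"
    using suminf_finite[OF fin outside] .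
  also have "\<dots> = W / W"
    by (simp add: inside W_def sum_divide_distrib[symmetric])
  finally show "wnorm \<omega> c \<le> 1" by (simp add: wnorm_def)
  have "push_op \<phi> c k = complex_of_real (\<Sum>j\<in>fiber \<phi> k. \<omega> j / sqrt W)"
    using \<open>3 \<le> k\<close> by (simp add: push_op_def c_def)
  also have "\<dots> = complex_of_real (sqrt W)"
    using \<open>W \<ge> 0\<close> by (simp add: W_def sum_divide_distrib[symmetric] real_div_sqrt)
  finally show "(cmod (push_op \<phi> c k))\<^sup>2 / \<omega> k = fiber_ratio \<omega> \<phi> k"
    using \<open>W \<ge> 0\<close> by (simp add: fiber_ratio_def W_def sum_divide_distrib[symmetric])
qed

lemma fiber_ratio_le_opnorm_sq:
  assumes fin: "\<And>k. finite (fiber \<phi> k)"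
    and bounded: "bounded_on_X \<omega> (push_op \<phi>)" and "3 \<le> k"
  shows "fiber_ratio \<omega> \<phi> k \<le> (opnorm_X \<omega> (push_op \<phi>))\<^sup>2"
proof -
  obtain c where c: "in_X \<omega> c" "wnorm \<omega> c \<le> 1"
    and attained: "(cmod (push_op \<phi> c k))\<^sup>2 / \<omega> k = fiber_ratio \<omega> \<phi> k"
    using fiber_ratio_attained[OF fin \<open>3 \<le> k\<close>] by blast
  have push_in_X: "in_X \<omega> (push_op \<phi> c)"
    using bounded c(1) by (simp add: bounded_on_X_def)
  have "fiber_ratio \<omega> \<phi> k \<le> (wnorm \<omega> (push_op \<phi> c))\<^sup>2"
    using coeff_sq_le_wnorm_sq[OF push_in_X] attained by metis
  also have "\<dots> \<le> (opnorm_X \<omega> (push_op \<phi>))\<^sup>2"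
    using wnorm_le_opnorm_X[OF bounded c] wnorm_nonneg[OF push_in_X] by (rule power_mono)
  finally show ?thesis .
qed

theorem bounded_push_op_iff:
  assumes fin: "\<And>k. finite (fiber \<phi> k)"
  shows "bounded_on_X \<omega> (push_op \<phi>) \<longleftrightarrow> bdd_above (fiber_ratio \<omega> \<phi> ` {3..})"
proof
  assume "bounded_on_X \<omega> (push_op \<phi>)"
  then show "bdd_above (fiber_ratio \<omega> \<phi> ` {3..})"
    using fiber_ratio_le_opnorm_sq[OF fin] by (auto intro!: bdd_aboveI)
next
  assume "bdd_above (fiber_ratio \<omega> \<phi> ` {3..})"
  then have "\<And>k. 3 \<le> k \<Longrightarrow> fiber_ratio \<omega> \<phi> k \<le> Sup (fiber_ratio \<omega> \<phi> ` {3..})"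
    by (auto intro: cSUP_upper)
  then show "bounded_on_X \<omega> (push_op \<phi>)"
    using push_op_bounded_by[OF fin] unfolding bounded_on_X_def by blast
qed

theorem opnorm_push_op_sq:
  assumes fin: "\<And>k. finite (fiber \<phi> k)" and bdd: "bdd_above (fiber_ratio \<omega> \<phi> ` {3..})"
  shows "(opnorm_X \<omega> (push_op \<phi>))\<^sup>2 = Sup (fiber_ratio \<omega> \<phi> ` {3..})"
    (is "_ = ?S")
proof (rule antisym)
  have bounded: "bounded_on_X \<omega> (push_op \<phi>)"
    using bounded_push_op_iff[OF fin] bdd by simp
  have le_S: "\<And>k. 3 \<le> k \<Longrightarrow> fiber_ratio \<omega> \<phi> k \<le> ?S"
    using bdd by (auto intro: cSUP_upper)
  have "0 \<le> ?S" using order_trans[OF fiber_ratio_nonneg le_S[of 3]] by simp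
  have "opnorm_X \<omega> (push_op \<phi>) \<le> sqrt ?S"
  proof (rule opnorm_X_le)
    fix c assume "in_X \<omega> c" "wnorm \<omega> c \<le> 1"
    then show "wnorm \<omega> (push_op \<phi> c) \<le> sqrt ?S"
      using push_op_bounded_by(2)[OF fin le_S] mult_left_le[of _ "sqrt ?S"] \<open>0 \<le> ?S\<close>
      by (meson order_trans real_sqrt_ge_zero)
  qed
  then show "(opnorm_X \<omega> (push_op \<phi>))\<^sup>2 \<le> ?S"
    using power_mono[OF _ opnorm_X_nonneg[OF bounded], of _ 2] \<open>0 \<le> ?S\<close> by fastforce
  show "?S \<le> (opnorm_X \<omega> (push_op \<phi>))\<^sup>2"
    using fiber_ratio_le_opnorm_sq[OF fin bounded] by (intro cSUP_least) auto
qed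

end

section \<open>The Collatz operator\<close>

lemma le_double_collatzT: "j \<le> 2 * collatzT j"
  by (simp add: collatzT_def)

lemma le_funpow_collatzT: "j \<le> 2 ^ n * (collatzT ^^ n) j"
proof (induction n)
  case (Suc n)
  have "2 ^ n * (collatzT ^^ n) j \<le> 2 ^ n * (2 * collatzT ((collatzT ^^ n) j))"
    using le_double_collatzT by (rule mult_left_mono) simp
  with Suc.IH have "j \<le> 2 ^ n * (2 * collatzT ((collatzT ^^ n) j))"
    by (rule order_trans)
  then show ?case by (simp add: algebra_simps)
qed simp

lemma finite_fiber_collatzT: "finite (fiber collatzT k)"
  by (rule finite_subset[of _ "{..2 * k}"]) (use le_double_collatzT in auto)

lemma finite_fiber_funpow_collatzT: "finite (fiber (collatzT ^^ n) k)"
  by (rule finite_subset[of _ "{..2 ^ n * k}"]) (use le_funpow_collatzT in auto)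

lemma ge_3_if_collatzT_ge_3: "3 \<le> collatzT i \<Longrightarrow> 3 \<le> i"
  by (cases "i < 3") (auto simp: collatzT_def numeral_3_eq_3 less_Suc_eq)

lemma Top_eq_push_op: "Top = push_op collatzT"
  unfolding Top_def push_op_def ..

lemma funpow_Top_eq_push_op:
  assumes "in_X \<omega> c"
  shows "(Top ^^ n) c = push_op (collatzT ^^ n) c"
proof (induction n)
  case 0
  have "push_op id c = c" using assms by (intro push_op_id) (simp add: in_X_def)
  then show ?case by (simp add: id_def)
next
  case (Suc n)
  then have "(Top ^^ Suc n) c = push_op collatzT (push_op (collatzT ^^ n) c)"
    by (simp add: Top_eq_push_op)
  also have "\<dots> = push_op (collatzT ^^ Suc n) c"
    by (simp add: push_op_comp finite_fiber_collatzT finite_fiber_funpow_collatzT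
        ge_3_if_collatzT_ge_3)
  finally show ?case .
qed

lemma collatzT_eq_iff: "collatzT j = k \<longleftrightarrow> j = 2 * k \<or> (odd j \<and> 3 * j + 1 = 2 * k)"
proof (cases "even j")
  case True
  then show ?thesis by (auto simp: collatzT_def elim!: evenE)
next
  case False
  then obtain b where b: "j = 2 * b + 1" by (auto elim!: oddE)
  then have "collatzT j = 3 * b + 2" by (simp add: collatzT_def)
  then show ?thesis by (simp add: b; presburger)
qed

lemma fiber_collatzT:
  assumes "1 \<le> m"
  shows "fiber collatzT (3 * m) = {6 * m}"
    and "fiber collatzT (3 * m + 1) = {6 * m + 2}"
    and "fiber collatzT (3 * m + 2) = {6 * m + 4, 2 * m + 1}"
  using assms by (auto simp: collatzT_eq_iff; presburger)+

lemma fiber_ratio_collatzT_image: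
  "fiber_ratio \<omega> collatzT ` {3..} =
     (\<lambda>m. \<omega> (6*m) / \<omega> (3*m)) ` {1..} \<union>
     (\<lambda>m. \<omega> (6*m+2) / \<omega> (3*m+1)) ` {1..} \<union>
     (\<lambda>m. (\<omega> (6*m+4) + \<omega> (2*m+1)) / \<omega> (3*m+2)) ` {1..}"
proof -
  have residues: "{3::nat..} = (\<lambda>m. 3*m) ` {1..} \<union> (\<lambda>m. 3*m+1) ` {1..} \<union> (\<lambda>m. 3*m+2) ` {1..}"
  proof (intro equalityI subsetI)
    fix k :: nat assume "k \<in> {3..}"
    then have "k div 3 \<in> {1..}" by auto
    moreover have "k = 3 * (k div 3) \<or> k = 3 * (k div 3) + 1 \<or> k = 3 * (k div 3) + 2"
      by presburger
    ultimately show "k \<in> (\<lambda>m. 3*m) ` {1..} \<union> (\<lambda>m. 3*m+1) ` {1..} \<union> (\<lambda>m. 3*m+2) ` {1..}"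
      by (elim disjE) (blast intro: rev_image_eqI)+
  qed auto
  have ratios:
    "fiber_ratio \<omega> collatzT (3*m) = \<omega> (6*m) / \<omega> (3*m)"
    "fiber_ratio \<omega> collatzT (3*m+1) = \<omega> (6*m+2) / \<omega> (3*m+1)"
    "fiber_ratio \<omega> collatzT (3*m+2) = (\<omega> (6*m+4) + \<omega> (2*m+1)) / \<omega> (3*m+2)"
    if "m \<in> {1..}" for m
    using that unfolding fiber_ratio_def fiber_collatzT[OF that[unfolded atLeast_iff]]
    by (simp_all add: add_divide_distrib)
  show ?thesis
    unfolding residues image_Un image_image
    by (intro arg_cong2[where f = "(\<union>)"] image_cong) (simp_all only: ratios)
qed

context positive_weight
begin

lemma bounded_Top_iff:
  "bounded_on_X \<omega> Top \<longleftrightarrow>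
     bdd_above ((\<lambda>m. \<omega> (6*m) / \<omega> (3*m)) ` {1..}) \<and>
     bdd_above ((\<lambda>m. \<omega> (6*m+2) / \<omega> (3*m+1)) ` {1..}) \<and>
     bdd_above ((\<lambda>m. (\<omega> (6*m+4) + \<omega> (2*m+1)) / \<omega> (3*m+2)) ` {1..})"
  using bounded_push_op_iff[OF finite_fiber_collatzT]
  by (simp add: Top_eq_push_op fiber_ratio_collatzT_image)

lemma opnorm_Top_sq:
  assumes "bounded_on_X \<omega> Top"
  shows "(opnorm_X \<omega> Top)\<^sup>2 =
           max (Sup ((\<lambda>m. \<omega> (6*m) / \<omega> (3*m)) ` {1..}))
             (max (Sup ((\<lambda>m. \<omega> (6*m+2) / \<omega> (3*m+1)) ` {1..}))
                  (Sup ((\<lambda>m. (\<omega> (6*m+4) + \<omega> (2*m+1)) / \<omega> (3*m+2)) ` {1..})))"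
  using assms opnorm_push_op_sq[OF finite_fiber_collatzT] bounded_Top_iff
  by (simp add: Top_eq_push_op fiber_ratio_collatzT_image cSup_union_distrib sup_max max.assoc)

lemma opnorm_funpow_Top_sq:
  assumes "bounded_on_X \<omega> Top"
  shows "(opnorm_X \<omega> (Top ^^ n))\<^sup>2 = Sup (fiber_ratio \<omega> (collatzT ^^ n) ` {3..})"
proof -
  have cong: "bounded_on_X \<omega> (Top ^^ n) = bounded_on_X \<omega> (push_op (collatzT ^^ n))"
    "opnorm_X \<omega> (Top ^^ n) = opnorm_X \<omega> (push_op (collatzT ^^ n))"
    using bounded_on_X_cong[of \<omega> "Top ^^ n"] funpow_Top_eq_push_op by blast+
  have "bdd_above (fiber_ratio \<omega> (collatzT ^^ n) ` {3..})"
    using bounded_on_X_funpow[OF assms] cong(1) bounded_push_op_iff[OF finite_fiber_funpow_collatzT]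
    by simp
  then show ?thesis
    using opnorm_push_op_sq[OF finite_fiber_funpow_collatzT] cong(2) by simp
qed

end

section \<open>The Bergman weight\<close>

lemma positive_weight_omega0: "positive_weight omega0"
  by unfold_locales (simp add: omega0_def)

lemma omega0_ratio: "omega0 a / omega0 b = (real a + 1) / (real b + 1)"
  by (simp add: omega0_def)

lemma omega0_ratios:
  "omega0 (6*m) / omega0 (3*m) \<le> 2"
  "omega0 (6*m+2) / omega0 (3*m+1) \<le> 2"
  "(omega0 (6*m+4) + omega0 (2*m+1)) / omega0 (3*m+2) = 8/3 - 1 / (3 * real m + 3)"
proof -
  show "omega0 (6*m) / omega0 (3*m) \<le> 2" "omega0 (6*m+2) / omega0 (3*m+1) \<le> 2"
    by (simp_all add: omega0_ratio field_simps)
  have "omega0 (6*m+4) + omega0 (2*m+1) = omega0 (8*m+6)"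
    by (simp add: omega0_def add_divide_distrib[symmetric])
  then show "(omega0 (6*m+4) + omega0 (2*m+1)) / omega0 (3*m+2) = 8/3 - 1 / (3 * real m + 3)"
    by (simp add: omega0_ratio field_simps)
qed

lemma Sup_omega0_ratio_odd_preimage:
  "Sup ((\<lambda>m. (omega0 (6*m+4) + omega0 (2*m+1)) / omega0 (3*m+2)) ` {1..}) = 8/3"
  unfolding omega0_ratios(3)
proof (rule cSup_eq_non_empty)
  fix y assume y: "\<And>x. x \<in> (\<lambda>m. 8/3 - 1 / (3 * real m + 3)) ` {1..} \<Longrightarrow> x \<le> y"
  show "8/3 \<le> y"
  proof (rule ccontr)
    assume "\<not> 8/3 \<le> y"
    then obtain n :: nat where "n > 0" and n: "inverse (real n) < 8/3 - y"
      using ex_inverse_of_nat_less[of "8/3 - y"] by auto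
    have "1 / (3 * real n + 3) < inverse (real n)"
      using \<open>n > 0\<close> by (simp add: field_simps)
    then have "y < 8/3 - 1 / (3 * real n + 3)" using n by linarith
    moreover have "8/3 - 1 / (3 * real n + 3) \<le> y" using y \<open>n > 0\<close> by auto
    ultimately show False by simp
  qed
qed auto

lemma bounded_Top_omega0: "bounded_on_X omega0 Top"
proof -
  have "bdd_above ((\<lambda>m. omega0 (6*m) / omega0 (3*m)) ` {1..})"
    "bdd_above ((\<lambda>m. omega0 (6*m+2) / omega0 (3*m+1)) ` {1..})"
    using omega0_ratios(1,2) by (auto intro!: bdd_aboveI2[where M = 2])
  moreover have "bdd_above ((\<lambda>m. (omega0 (6*m+4) + omega0 (2*m+1)) / omega0 (3*m+2)) ` {1..})"
    unfolding omega0_ratios(3) by (auto intro!: bdd_aboveI2[where M = "8/3"])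
  ultimately show ?thesis
    using positive_weight.bounded_Top_iff[OF positive_weight_omega0] by blast
qed

lemma opnorm_Top_omega0_sq: "(opnorm_X omega0 Top)\<^sup>2 = 8/3"
proof -
  have "Sup ((\<lambda>m. omega0 (6*m) / omega0 (3*m)) ` {1..}) \<le> 2"
    "Sup ((\<lambda>m. omega0 (6*m+2) / omega0 (3*m+1)) ` {1..}) \<le> 2"
    using omega0_ratios(1,2) by (auto intro!: cSUP_least)
  then show ?thesis
    using positive_weight.opnorm_Top_sq[OF positive_weight_omega0 bounded_Top_omega0]
      Sup_omega0_ratio_odd_preimage by linarith
qed

theorem proposition2p1:
  fixes \<omega> :: "nat \<Rightarrow> real"
  assumes pos: "\<forall>n. \<omega> n > 0"
  shows "(bounded_on_X \<omega> Top \<longleftrightarrow>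
            bdd_above ((\<lambda>m. \<omega> (6*m) / \<omega> (3*m)) ` {1..}) \<and>
            bdd_above ((\<lambda>m. \<omega> (6*m+2) / \<omega> (3*m+1)) ` {1..}) \<and>
            bdd_above ((\<lambda>m. (\<omega> (6*m+4) + \<omega> (2*m+1)) / \<omega> (3*m+2)) ` {1..}))
       \<and> (bounded_on_X \<omega> Top \<longrightarrow>
            (opnorm_X \<omega> Top)\<^sup>2 =
              max (Sup ((\<lambda>m. \<omega> (6*m) / \<omega> (3*m)) ` {1..}))
                (max (Sup ((\<lambda>m. \<omega> (6*m+2) / \<omega> (3*m+1)) ` {1..}))
                     (Sup ((\<lambda>m. (\<omega> (6*m+4) + \<omega> (2*m+1)) / \<omega> (3*m+2)) ` {1..})))
          \<and> (\<forall>n::nat. (opnorm_X \<omega> (Top ^^ n))\<^sup>2 =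
               Sup ((\<lambda>k. \<Sum>j\<in>{j. 3 \<le> j \<and> (collatzT ^^ n) j = k}. \<omega> j / \<omega> k) ` {3..})))
       \<and> bounded_on_X omega0 Top \<and> (opnorm_X omega0 Top)\<^sup>2 = 8 / 3"
proof -
  interpret positive_weight \<omega>
    using pos by unfold_locales simp
  show ?thesis
    using bounded_Top_iff opnorm_Top_sq opnorm_funpow_Top_sq[unfolded fiber_ratio_def]
      bounded_Top_omega0 opnorm_Top_omega0_sq
    by blast
qed

end
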